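(* Let $3\le n\le k$ be integers and let $X$ be the discrete-time Markov chain on $\mathbb{N}^{n-1}$ described in the context. If $k>n$, then $X$ is stable (ergodic, i.e. positive recurrent).
   Context: $\mathbb{N}=\{0,1,2,\dots\}$. $\mathbf{0}$, $\mathbf{1}$ are the all-zero and all-one vectors of dimension $n-1$, $\mathbf{e}_l$ the $l$-th unit vector. For $j=0,\dots,n-1$, $R_j$ is the set of $\mathbf{x}\in\mathbb{N}^{n-1}$ with exactly $j$ zero entries. $X$ is the Markov chain on $\mathbb{N}^{n-1}$ with nonzero transition probabilities: from $\mathbf{x}\in R_0$, to $\mathbf{x}-\mathbf{1}$ w.p. $\frac{k-(n-1)}{k}$ and to $\mathbf{x}+\mathbf{e}_l$ w.p. $\frac1k$ ($l=1,\dots,n-1$); from $\mathbf{x}\in R_j$, $1\le j\le n-2$, to $\mathbf{x}+\mathbf{e}_l$ w.p. $\frac{k-(n-1-j)}{kj}$ if $x_l=0$ and w.p. $\frac1k$ if $x_l\ge1$; from $\mathbf{0}$ to $\mathbf{e}_l$ w.p. $\frac1{n-1}$. This chain is irreducible and aperiodic. *)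

theory Defs
  imports "HOL-Analysis.Analysis"
begin

text \<open>States of the chain on N^(n-1): lists of naturals of length n-1
  (entry number l+1 of the paper is list index l).\<close>

definition states :: "nat \<Rightarrow> nat list set" where
  "states n = {x. length x = n - 1}"

text \<open>Number of zero entries; x is in R_j iff zeros x = j.\<close>
definition zeros :: "nat list \<Rightarrow> nat" where
  "zeros x = length (filter (\<lambda>a. a = 0) x)"

definition incr :: "nat list \<Rightarrow> nat \<Rightarrow> nat list" where
  "incr x l = x[l := Suc (x ! l)]"

text \<open>x - 1 (only used for x in R_0).\<close>
definition decr_all :: "nat list \<Rightarrow> nat list" where
  "decr_all x = map (\<lambda>a. a - 1) x"

text \<open>One-step transition probability P(x,y) of the chain X with parameters n, k.
  Since distinct l give distinct x + e_l, the sums over l just pick the unique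
  matching l (if any).\<close>
definition trans_prob :: "nat \<Rightarrow> nat \<Rightarrow> nat list \<Rightarrow> nat list \<Rightarrow> real" where
  "trans_prob n k x y =
    (if x \<notin> states n \<or> y \<notin> states n then 0
     else if zeros x = 0 then
       (if y = decr_all x then (real k - real (n - 1)) / real k else 0)
       + (\<Sum>l<n - 1. if y = incr x l then 1 / real k else 0)
     else if zeros x = n - 1 then
       (\<Sum>l<n - 1. if y = incr x l then 1 / real (n - 1) else 0)
     else
       (\<Sum>l<n - 1. if y = incr x l then
           (if x ! l = 0 then (real k - real (n - 1 - zeros x)) / (real k * real (zeros x))
            else 1 / real k)
         else 0))"

fun first_passage :: "nat \<Rightarrow> nat \<Rightarrow> nat \<Rightarrow> nat list \<Rightarrow> nat list \<Rightarrow> ennreal" where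
  "first_passage n k 0 x y = 0"
| "first_passage n k (Suc 0) x y = ennreal (trans_prob n k x y)"
| "first_passage n k (Suc (Suc m)) x y =
     (\<Sum>\<^sub>\<infinity>z \<in> states n - {y}. ennreal (trans_prob n k x z) * first_passage n k (Suc m) z y)"

definition positive_recurrent :: "nat \<Rightarrow> nat \<Rightarrow> nat list \<Rightarrow> bool" where
  "positive_recurrent n k x \<longleftrightarrow>
     (\<Sum>m. first_passage n k m x x) = 1 \<and>
     (\<Sum>m. of_nat m * first_passage n k m x x) < \<infinity>"

definition stable :: "nat \<Rightarrow> nat \<Rightarrow> bool" where
  "stable n k \<longleftrightarrow> (\<forall>x \<in> states n. positive_recurrent n k x)"

end

theory Submission
  imports Defs
begin

text \<open>Foster--Lyapunov argument. The quadratic function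
  \<open>V x = k ((k + n - 1) \<Sum> x\<^sub>i\<^sup>2 - 2 (\<Sum> x\<^sub>i)\<^sup>2)\<close> is nonnegative by Cauchy--Schwarz and has
  one-step drift at most \<open>B - 2 \<Sum> x\<^sub>i\<close>; here \<open>k > n\<close> is what makes the drift negative on \<open>R\<^sub>0\<close>.
  So the drift is at most \<open>-1\<close> outside a finite set. Fix a target state \<open>y\<close>. From every state
  some move of probability at least \<open>1/k\<close> either reaches \<open>y\<close> or lowers a rank function;
  adding to \<open>V\<close> a bounded correction that grows geometrically as the rank decreases turns it
  into a nonnegative supersolution \<open>W \<ge> 1 + P (W \<cdot> 1\<^bsub>\<noteq>y\<^esub>)\<close> of the mean hitting time equation
  of \<open>y\<close>. Iterating this inequality bounds both \<open>t\<close> times the probability of not having returned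
  to \<open>y\<close> by time \<open>t\<close> and the truncated mean return time by \<open>W y\<close>, so \<open>y\<close> is positive recurrent.\<close>

section \<open>Hitting times of a finitely supported Markov kernel\<close>

text \<open>The potential is multiplied by \<open>L = (B + 2) / p\<close> along each step towards \<open>y\<close>, so a step taken
  with probability at least \<open>p\<close> pays for the drift bound \<open>B\<close>, a unit of time and the potential itself.\<close>

lemma geometric_rank_potential:
  fixes B p :: real and C :: "'a set" and step :: "'a \<Rightarrow> 'a" and rank :: "'a \<Rightarrow> nat"
  assumes C: "finite C" and B: "0 \<le> B" and p: "0 < p" "p \<le> 1"
    and step_rank: "\<And>x. x \<in> S \<Longrightarrow> step x = y \<or> rank (step x) < rank x"
  obtains u :: "'a \<Rightarrow> real" and c where "\<And>x. 0 \<le> u x" and "\<And>x. u x \<le> c"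
    and "\<And>x. x \<in> S \<Longrightarrow> x \<in> C \<or> u x \<noteq> 0 \<Longrightarrow>
      1 + B + u x \<le> p * (if step x = y then c else u (step x))"
proof -
  define D where "D = Max (rank ` C)"
  define L where "L = (B + 2) / p"
  define u where "u x = (if rank x \<le> D then L ^ (D - rank x) else 0)" for x
  define c where "c = (1 + B + L ^ D) / p"
  have L: "2 \<le> L"
    unfolding L_def using p B by (simp add: field_simps)
  have u_nonneg: "0 \<le> u x" and u_le: "u x \<le> L ^ D" for x
    unfolding u_def using L by (auto intro: power_increasing)
  have "L ^ D \<le> 1 + B + L ^ D"
    using B by simp
  also have "\<dots> \<le> c"
    unfolding c_def using p B L by (simp add: le_divide_eq mult_left_le)
  finally have u_le_c: "u x \<le> c" for x
    using u_le order_trans by blast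
  have "1 + B + u x \<le> p * (if step x = y then c else u (step x))"
    if x: "x \<in> S" and "x \<in> C \<or> u x \<noteq> 0" for x
  proof -
    have D: "rank x \<le> D"
      using that C by (auto simp: D_def u_def split: if_splits)
    show ?thesis
    proof (cases "step x = y")
      case True
      then show ?thesis
        using p u_le[of x] by (simp add: c_def)
    next
      case False
      then have "rank (step x) < rank x"
        using step_rank[OF x] by simp
      then have "L * u x \<le> u (step x)"
        using D L by (simp add: u_def flip: power_Suc)
      moreover have "1 + B + u x \<le> (B + 2) * u x"
        using mult_left_mono[of 1 "u x" "B + 1"] B D L by (simp add: u_def algebra_simps)
      ultimately show ?thesis
        using p False by (simp add: L_def field_simps)
    qed
  qed
  with u_nonneg u_le_c show ?thesis
    using that by blast
qed

locale finite_kernel =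
  fixes S :: "'a set" and P :: "'a \<Rightarrow> 'a \<Rightarrow> real" and N :: "'a \<Rightarrow> 'a set"
  assumes finite_N [simp]: "finite (N x)"
    and N_subset: "x \<in> S \<Longrightarrow> N x \<subseteq> S"
    and P_nonneg: "0 \<le> P x z"
    and P_outside_N: "z \<notin> N x \<Longrightarrow> P x z = 0"
    and P_sum: "x \<in> S \<Longrightarrow> (\<Sum>z\<in>N x. P x z) = 1"
begin

definition expect :: "('a \<Rightarrow> real) \<Rightarrow> 'a \<Rightarrow> real" where
  "expect f x = (\<Sum>z\<in>N x. P x z * f z)"

lemma expect_cong: "(\<And>z. z \<in> N x \<Longrightarrow> f z = g z) \<Longrightarrow> expect f x = expect g x"
  unfolding expect_def by simp

lemma expect_add: "expect (\<lambda>z. f z + g z) x = expect f x + expect g x"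
  unfolding expect_def by (simp add: distrib_left sum.distrib)

lemma expect_diff: "expect (\<lambda>z. f z - g z) x = expect f x - expect g x"
  unfolding expect_def by (simp add: right_diff_distrib sum_subtractf)

lemma expect_cmult: "expect (\<lambda>z. c * f z) x = c * expect f x"
  unfolding expect_def by (simp add: sum_distrib_left algebra_simps)

lemma expect_sum: "expect (\<lambda>z. \<Sum>i\<in>I. f i z) x = (\<Sum>i\<in>I. expect (f i) x)"
  unfolding expect_def by (simp add: sum_distrib_left sum.swap[where A = "N x"])

lemma expect_const: "x \<in> S \<Longrightarrow> expect (\<lambda>z. c) x = c"
  unfolding expect_def by (simp add: P_sum flip: sum_distrib_right)

lemma expect_mono: "(\<And>z. z \<in> N x \<Longrightarrow> f z \<le> g z) \<Longrightarrow> expect f x \<le> expect g x"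
  unfolding expect_def by (auto intro!: sum_mono mult_left_mono P_nonneg)

lemma expect_nonneg: "(\<And>z. z \<in> N x \<Longrightarrow> 0 \<le> f z) \<Longrightarrow> 0 \<le> expect f x"
  unfolding expect_def by (auto intro!: sum_nonneg mult_nonneg_nonneg P_nonneg)

lemma expect_ge_term:
  assumes "z \<in> N x" and "\<And>z. z \<in> N x \<Longrightarrow> 0 \<le> f z"
  shows "P x z * f z \<le> expect f x"
  unfolding expect_def using assms by (intro member_le_sum) (auto intro: mult_nonneg_nonneg P_nonneg)

lemma expect_indicator: "expect (\<lambda>z. if z = y then 1 else 0) x = P x y"
  unfolding expect_def by (simp add: if_distrib cong: if_cong) (use P_outside_N in auto)

lemma infsum_eq_expect:
  assumes "x \<in> S" and "\<And>z. 0 \<le> g z"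
  shows "(\<Sum>\<^sub>\<infinity>z\<in>S - {y}. ennreal (P x z) * ennreal (g z))
           = ennreal (expect (\<lambda>z. if z = y then 0 else g z) x)"
proof -
  have "(\<Sum>\<^sub>\<infinity>z\<in>S - {y}. ennreal (P x z) * ennreal (g z))
      = (\<Sum>\<^sub>\<infinity>z\<in>N x. ennreal (P x z * (if z = y then 0 else g z)))"
    using N_subset[OF assms(1)] assms(2)
    by (intro infsum_cong_neutral) (auto simp: P_outside_N P_nonneg ennreal_mult)
  also have "\<dots> = ennreal (expect (\<lambda>z. if z = y then 0 else g z) x)"
    unfolding expect_def using assms(2) P_nonneg by simp
  finally show ?thesis .
qed

text \<open>Real-valued counterpart of \<^const>\<open>first_passage\<close>: with finitely supported transitions the
  infinite sum in its recursion becomes the finite sum \<^const>\<open>expect\<close> (see \<open>infsum_eq_expect\<close>).\<close>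

fun passage_prob :: "'a \<Rightarrow> nat \<Rightarrow> 'a \<Rightarrow> real" where
  "passage_prob y 0 x = 0"
| "passage_prob y (Suc 0) x = P x y"
| "passage_prob y (Suc (Suc m)) x = expect (\<lambda>z. if z = y then 0 else passage_prob y (Suc m) z) x"

lemma passage_prob_nonneg: "0 \<le> passage_prob y m x"
  by (induction y m x rule: passage_prob.induct) (auto simp: P_nonneg intro!: expect_nonneg)

lemma passage_prob_Suc:
  "passage_prob y (Suc m) x = expect (\<lambda>z. if z = y then of_bool (m = 0) else passage_prob y m z) x"
  by (cases m) (simp_all add: expect_indicator cong: if_cong)

definition hit_prob_within :: "'a \<Rightarrow> nat \<Rightarrow> 'a \<Rightarrow> real" where
  "hit_prob_within y t x = (\<Sum>m<t. passage_prob y (Suc m) x)"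

definition truncated_hit_time :: "'a \<Rightarrow> nat \<Rightarrow> 'a \<Rightarrow> real" where
  "truncated_hit_time y t x = (\<Sum>m<t. real (Suc m) * passage_prob y (Suc m) x)"

lemma hit_prob_within_Suc:
  "hit_prob_within y (Suc t) x = expect (\<lambda>z. if z = y then 1 else hit_prob_within y t z) x"
proof -
  have "hit_prob_within y (Suc t) x
      = expect (\<lambda>z. \<Sum>m<Suc t. if z = y then of_bool (m = 0) else passage_prob y m z) x"
    unfolding hit_prob_within_def passage_prob_Suc by (simp only: expect_sum)
  also have "\<dots> = expect (\<lambda>z. if z = y then 1 else hit_prob_within y t z) x"
    by (intro expect_cong) (simp add: hit_prob_within_def sum.lessThan_Suc_shift del: sum.lessThan_Suc)
  finally show ?thesis .
qed

lemma truncated_hit_time_Suc: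
  "truncated_hit_time y (Suc t) x
     = hit_prob_within y (Suc t) x + expect (\<lambda>z. if z = y then 0 else truncated_hit_time y t z) x"
proof -
  have "truncated_hit_time y (Suc t) x
      = hit_prob_within y (Suc t) x + (\<Sum>m<Suc t. real m * passage_prob y (Suc m) x)"
    unfolding truncated_hit_time_def hit_prob_within_def
    by (simp add: algebra_simps sum.distrib[symmetric] del: sum.lessThan_Suc)
  also have "(\<Sum>m<Suc t. real m * passage_prob y (Suc m) x)
      = expect (\<lambda>z. \<Sum>m<Suc t. real m * (if z = y then of_bool (m = 0) else passage_prob y m z)) x"
    unfolding passage_prob_Suc by (simp only: expect_cmult expect_sum)
  also have "\<dots> = expect (\<lambda>z. if z = y then 0 else truncated_hit_time y t z) x"
    by (intro expect_cong) (simp add: truncated_hit_time_def sum.lessThan_Suc_shift del: sum.lessThan_Suc)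
  finally show ?thesis .
qed

lemma hit_prob_within_mono: "s \<le> t \<Longrightarrow> hit_prob_within y s x \<le> hit_prob_within y t x"
  by (rule lift_Suc_mono_le) (simp_all add: hit_prob_within_def passage_prob_nonneg)

lemma hit_prob_within_le_1: "x \<in> S \<Longrightarrow> hit_prob_within y t x \<le> 1"
proof (induction t arbitrary: x)
  case 0
  then show ?case by (simp add: hit_prob_within_def)
next
  case (Suc t)
  have "hit_prob_within y (Suc t) x \<le> expect (\<lambda>z. 1) x"
    unfolding hit_prob_within_Suc using N_subset[OF Suc.prems] Suc.IH by (intro expect_mono) auto
  then show ?case using expect_const[OF Suc.prems] by simp
qed

definition mean_hitting_supersolution :: "'a \<Rightarrow> ('a \<Rightarrow> real) \<Rightarrow> bool" where
  "mean_hitting_supersolution y W \<longleftrightarrow>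
     (\<forall>x\<in>S. 0 \<le> W x \<and> 1 + expect (\<lambda>z. if z = y then 0 else W z) x \<le> W x)"

context
  fixes y :: 'a and W :: "'a \<Rightarrow> real"
  assumes W: "mean_hitting_supersolution y W"
begin

lemma supersolution_nonneg: "x \<in> S \<Longrightarrow> 0 \<le> W x"
  using W unfolding mean_hitting_supersolution_def by blast

lemma supersolution_ineq: "x \<in> S \<Longrightarrow> 1 + expect (\<lambda>z. if z = y then 0 else W z) x \<le> W x"
  using W unfolding mean_hitting_supersolution_def by blast

lemma sum_miss_prob_le: "x \<in> S \<Longrightarrow> (\<Sum>s<t. 1 - hit_prob_within y s x) \<le> W x"
proof (induction t arbitrary: x)
  case 0
  then show ?case by (simp add: supersolution_nonneg)
next
  case (Suc t)
  have miss_Suc: "1 - hit_prob_within y (Suc s) x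
      = expect (\<lambda>z. if z = y then 0 else 1 - hit_prob_within y s z) x" for s
  proof -
    have "1 - hit_prob_within y (Suc s) x
        = expect (\<lambda>z. 1 - (if z = y then 1 else hit_prob_within y s z)) x"
      by (simp add: expect_diff expect_const[OF Suc.prems] hit_prob_within_Suc)
    also have "\<dots> = expect (\<lambda>z. if z = y then 0 else 1 - hit_prob_within y s z) x"
      by (intro expect_cong) simp
    finally show ?thesis .
  qed
  have "(\<Sum>s<Suc t. 1 - hit_prob_within y s x) = 1 + (\<Sum>s<t. 1 - hit_prob_within y (Suc s) x)"
    by (simp add: sum.lessThan_Suc_shift hit_prob_within_def del: sum.lessThan_Suc)
  also have "\<dots> = 1 + expect (\<lambda>z. if z = y then 0 else \<Sum>s<t. 1 - hit_prob_within y s z) x"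
    unfolding miss_Suc expect_sum[symmetric] by (intro arg_cong[where f = "(+) 1"] expect_cong) simp
  also have "\<dots> \<le> 1 + expect (\<lambda>z. if z = y then 0 else W z) x"
    using N_subset[OF Suc.prems] Suc.IH by (auto intro!: expect_mono)
  also have "\<dots> \<le> W x"
    using supersolution_ineq[OF Suc.prems] .
  finally show ?case .
qed

lemma hit_prob_within_tendsto_1:
  assumes x: "x \<in> S"
  shows "(\<lambda>t. hit_prob_within y t x) \<longlonglongrightarrow> 1"
proof (rule tendsto_sandwich)
  show "\<forall>\<^sub>F t in sequentially. 1 - W x / real t \<le> hit_prob_within y t x"
    unfolding eventually_sequentially
  proof (intro exI allI impI)
    fix t :: nat assume "1 \<le> t"
    have "real t * (1 - hit_prob_within y t x) = (\<Sum>s<t. 1 - hit_prob_within y t x)"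
      by simp
    also have "\<dots> \<le> (\<Sum>s<t. 1 - hit_prob_within y s x)"
      by (intro sum_mono) (simp add: hit_prob_within_mono)
    also have "\<dots> \<le> W x"
      using sum_miss_prob_le[OF x] .
    finally show "1 - W x / real t \<le> hit_prob_within y t x"
      using \<open>1 \<le> t\<close> by (simp add: field_simps)
  qed
  show "\<forall>\<^sub>F t in sequentially. hit_prob_within y t x \<le> 1"
    using hit_prob_within_le_1[OF x] by simp
  show "(\<lambda>t. 1 - W x / real t) \<longlonglongrightarrow> 1"
    using tendsto_diff[OF tendsto_const lim_const_over_n[of "W x"], of 1] by simp
qed simp

lemma passage_prob_sums_1: "x \<in> S \<Longrightarrow> (\<lambda>m. passage_prob y m x) sums 1"
  using hit_prob_within_tendsto_1 sums_Suc_iff[of "\<lambda>m. passage_prob y m x" 1]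
  unfolding sums_def hit_prob_within_def by simp

lemma truncated_hit_time_le: "x \<in> S \<Longrightarrow> truncated_hit_time y t x \<le> W x"
proof (induction t arbitrary: x)
  case 0
  then show ?case by (simp add: truncated_hit_time_def supersolution_nonneg)
next
  case (Suc t)
  have "truncated_hit_time y (Suc t) x
      \<le> 1 + expect (\<lambda>z. if z = y then 0 else truncated_hit_time y t z) x"
    unfolding truncated_hit_time_Suc using hit_prob_within_le_1[OF Suc.prems] by simp
  also have "\<dots> \<le> 1 + expect (\<lambda>z. if z = y then 0 else W z) x"
    using N_subset[OF Suc.prems] Suc.IH by (auto intro!: expect_mono)
  also have "\<dots> \<le> W x"
    using supersolution_ineq[OF Suc.prems] .
  finally show ?case .
qed

lemma summable_hit_time:
  assumes x: "x \<in> S"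
  shows "summable (\<lambda>m. real m * passage_prob y m x)"
proof -
  have "summable (\<lambda>m. real (Suc m) * passage_prob y (Suc m) x)"
  proof (rule bounded_imp_summable)
    show "(\<Sum>m\<le>t. real (Suc m) * passage_prob y (Suc m) x) \<le> W x" for t
      using truncated_hit_time_le[OF x, of "Suc t"]
      unfolding truncated_hit_time_def lessThan_Suc_atMost .
  qed (simp add: passage_prob_nonneg)
  then show ?thesis
    by (subst summable_Suc_iff[symmetric])
qed

end

lemma mean_hitting_supersolution_off_target:
  assumes y: "y \<in> S"
    and nonneg: "\<And>x. x \<in> S \<Longrightarrow> 0 \<le> W x"
    and ineq: "\<And>x. x \<in> S \<Longrightarrow> x \<noteq> y \<Longrightarrow> 1 + expect (\<lambda>z. if z = y then 0 else W z) x \<le> W x"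
  shows "mean_hitting_supersolution y (W(y := 1 + expect (\<lambda>z. if z = y then 0 else W z) y))"
proof -
  define W' where "W' = W(y := 1 + expect (\<lambda>z. if z = y then 0 else W z) y)"
  have same: "expect (\<lambda>z. if z = y then 0 else W' z) x = expect (\<lambda>z. if z = y then 0 else W z) x" for x
    unfolding W'_def by (intro expect_cong) simp
  have "0 \<le> expect (\<lambda>z. if z = y then 0 else W z) y"
    using N_subset[OF y] nonneg by (intro expect_nonneg) auto
  then show ?thesis
    using nonneg ineq unfolding mean_hitting_supersolution_def same W'_def[symmetric]
    by (auto simp: W'_def)
qed

lemma mean_hitting_supersolution_exists:
  fixes V :: "'a \<Rightarrow> real" and B p :: real and C :: "'a set"
    and step :: "'a \<Rightarrow> 'a" and rank :: "'a \<Rightarrow> nat"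
  assumes y: "y \<in> S" and C: "finite C" and B: "0 \<le> B" and p: "0 < p"
    and V_nonneg: "\<And>x. x \<in> S \<Longrightarrow> 0 \<le> V x"
    and drift_bounded: "\<And>x. x \<in> S \<Longrightarrow> expect V x \<le> V x + B"
    and drift_negative: "\<And>x. x \<in> S - C \<Longrightarrow> expect V x \<le> V x - 1"
    and step_N: "\<And>x. x \<in> S \<Longrightarrow> step x \<in> N x"
    and step_prob: "\<And>x. x \<in> S \<Longrightarrow> p \<le> P x (step x)"
    and step_rank: "\<And>x. x \<in> S \<Longrightarrow> step x = y \<or> rank (step x) < rank x"
  shows "\<exists>W. mean_hitting_supersolution y W"
proof -
  have "p \<le> 1"
    using step_prob[OF y] member_le_sum[of "step y" "N y" "P y"] P_sum[OF y] step_N[OF y] P_nonneg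
    by fastforce
  obtain u :: "'a \<Rightarrow> real" and c where u_nonneg: "\<And>x. 0 \<le> u x" and u_le_c: "\<And>x. u x \<le> c"
    and u_step: "\<And>x. x \<in> S \<Longrightarrow> x \<in> C \<or> u x \<noteq> 0 \<Longrightarrow>
      1 + B + u x \<le> p * (if step x = y then c else u (step x))"
    using geometric_rank_potential[OF C B p \<open>p \<le> 1\<close> step_rank] by blast
  define g where "g z = (if z = y then c else u z)" for z
  define W where "W x = V x + c - u x" for x
  have c_nonneg: "0 \<le> c"
    using u_nonneg u_le_c order_trans by blast
  have W_nonneg: "0 \<le> W x" if "x \<in> S" for x
    unfolding W_def using V_nonneg[OF that] u_le_c[of x] by simp
  have "1 + expect (\<lambda>z. if z = y then 0 else W z) x \<le> W x" if x: "x \<in> S" "x \<noteq> y" for x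
  proof (cases "x \<in> C \<or> u x \<noteq> 0")
    case True
    have "expect (\<lambda>z. if z = y then 0 else W z) x \<le> expect (\<lambda>z. V z + c - g z) x"
      using N_subset[OF x(1)] V_nonneg by (intro expect_mono) (auto simp: W_def g_def)
    also have "\<dots> \<le> V x + B + c - expect g x"
      using drift_bounded[OF x(1)] by (simp add: expect_add expect_diff expect_const[OF x(1)])
    finally have off_y: "expect (\<lambda>z. if z = y then 0 else W z) x \<le> V x + B + c - expect g x" .
    have "1 + B + u x \<le> p * g (step x)"
      using u_step[OF x(1) True] by (simp add: g_def)
    also have "\<dots> \<le> P x (step x) * g (step x)"
      using step_prob[OF x(1)] u_nonneg c_nonneg by (intro mult_right_mono) (auto simp: g_def)
    also have "\<dots> \<le> expect g x"
      using step_N[OF x(1)] u_nonneg c_nonneg by (intro expect_ge_term) (auto simp: g_def)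
    finally show ?thesis
      using off_y by (simp add: W_def)
  next
    case False
    have "expect (\<lambda>z. if z = y then 0 else W z) x \<le> expect (\<lambda>z. V z + c) x"
      using N_subset[OF x(1)] u_nonneg V_nonneg c_nonneg by (intro expect_mono) (auto simp: W_def)
    also have "\<dots> \<le> V x - 1 + c"
      using drift_negative False x by (simp add: expect_add expect_const)
    finally show ?thesis
      using False by (simp add: W_def)
  qed
  then show ?thesis
    using mean_hitting_supersolution_off_target[OF y, of W] W_nonneg by blast
qed

end

section \<open>The chain \<open>X\<close>\<close>

locale chain =
  fixes n k :: nat
  assumes n2: "2 \<le> n" and nk: "n < k"
begin

definition successors :: "nat list \<Rightarrow> nat list set" where
  "successors x = insert (decr_all x) (incr x ` {..<n - 1})"

definition down_prob :: "nat list \<Rightarrow> real" where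
  "down_prob x = (if zeros x = 0 then (real k - real (n - 1)) / real k else 0)"

definition up_prob :: "nat list \<Rightarrow> nat \<Rightarrow> real" where
  "up_prob x l =
    (if zeros x = 0 then 1 / real k
     else if zeros x = n - 1 then 1 / real (n - 1)
     else if x ! l = 0 then (real k - real (n - 1 - zeros x)) / (real k * real (zeros x))
     else 1 / real k)"

lemma of_nat_n_minus_1 [simp]: "real (n - Suc 0) = real n - 1"
  using n2 by (simp add: of_nat_diff)

lemma k_pos: "0 < real k"
  using nk by simp

lemma incr_in_states [simp]: "x \<in> states n \<Longrightarrow> incr x l \<in> states n"
  unfolding states_def incr_def by simp

lemma decr_all_in_states [simp]: "x \<in> states n \<Longrightarrow> decr_all x \<in> states n"
  unfolding states_def decr_all_def by simp

lemma successors_subset: "x \<in> states n \<Longrightarrow> successors x \<subseteq> states n"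
  unfolding successors_def by auto

lemma nth_incr:
  "x \<in> states n \<Longrightarrow> i < n - 1 \<Longrightarrow> incr x l ! i = (if i = l then Suc (x ! l) else x ! i)"
  unfolding incr_def states_def by auto

lemma zeros_le: "x \<in> states n \<Longrightarrow> zeros x \<le> n - 1"
  unfolding zeros_def states_def by (metis length_filter_le mem_Collect_eq)

lemma zeros_eq_card: "x \<in> states n \<Longrightarrow> zeros x = card {l \<in> {..<n - 1}. x ! l = 0}"
  unfolding zeros_def states_def length_filter_conv_card by (auto intro!: arg_cong[where f = card])

lemma zeros_eq_0_iff: "x \<in> states n \<Longrightarrow> zeros x = 0 \<longleftrightarrow> (\<forall>l < n - 1. x ! l \<noteq> 0)"
  unfolding zeros_def states_def by (auto simp: filter_empty_conv in_set_conv_nth)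

lemma nth_eq_0_if_zeros_full: "x \<in> states n \<Longrightarrow> zeros x = n - 1 \<Longrightarrow> l < n - 1 \<Longrightarrow> x ! l = 0"
  unfolding zeros_def states_def
  by (metis (mono_tags, lifting) length_filter_less mem_Collect_eq nat_less_le nth_mem)

lemma nth_decr_all: "x \<in> states n \<Longrightarrow> zeros x = 0 \<Longrightarrow> i < n - 1 \<Longrightarrow>
    real (decr_all x ! i) = real (x ! i) - 1"
  using zeros_eq_0_iff[of x] unfolding decr_all_def states_def by (auto simp: of_nat_diff)

lemma trans_prob_eq:
  assumes "x \<in> states n" "z \<in> states n"
  shows "trans_prob n k x z = (if z = decr_all x then down_prob x else 0)
     + (\<Sum>l<n - 1. if z = incr x l then up_prob x l else 0)"
  using assms unfolding trans_prob_def down_prob_def up_prob_def by (auto intro!: sum.cong)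

lemma down_prob_nonneg: "0 \<le> down_prob x"
  using nk unfolding down_prob_def by auto

lemma up_prob_ge: "x \<in> states n \<Longrightarrow> 1 / real k \<le> up_prob x l"
proof -
  assume x: "x \<in> states n"
  consider "zeros x = 0" | "zeros x = n - 1" "zeros x \<noteq> 0" | "0 < zeros x" "zeros x < n - 1"
    using zeros_le[OF x] by linarith
  then show ?thesis
  proof cases
    case 2
    then show ?thesis
      using nk k_pos by (simp add: up_prob_def frac_le)
  next
    case 3
    have "1 / real k = real (zeros x) / (real k * real (zeros x))"
      using 3 by simp
    also have "\<dots> \<le> (real k - real (n - 1 - zeros x)) / (real k * real (zeros x))"
      using 3 nk by (intro divide_right_mono) (simp_all add: of_nat_diff)
    finally show ?thesis
      using 3 by (simp add: up_prob_def)
  qed (simp add: up_prob_def)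
qed

lemma up_prob_nonneg: "x \<in> states n \<Longrightarrow> 0 \<le> up_prob x l"
  using up_prob_ge[of x l] k_pos by (meson order_trans less_eq_real_def divide_pos_pos zero_less_one)

lemma trans_prob_nonneg: "0 \<le> trans_prob n k x z"
proof (cases "x \<in> states n \<and> z \<in> states n")
  case True
  then show ?thesis
    using down_prob_nonneg up_prob_nonneg by (auto simp: trans_prob_eq intro!: add_nonneg_nonneg sum_nonneg)
qed (auto simp: trans_prob_def)

lemma trans_prob_outside:
  assumes "z \<notin> successors x"
  shows "trans_prob n k x z = 0"
proof (cases "x \<in> states n \<and> z \<in> states n")
  case True
  then show ?thesis
    using assms trans_prob_eq[of x z] by (auto simp: successors_def intro!: sum.neutral)
qed (auto simp: trans_prob_def)

lemma sum_successors_trans_prob: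
  assumes x: "x \<in> states n"
  shows "(\<Sum>z\<in>successors x. trans_prob n k x z * f z)
     = down_prob x * f (decr_all x) + (\<Sum>l<n - 1. up_prob x l * f (incr x l))"
proof -
  have "(\<Sum>z\<in>successors x. trans_prob n k x z * f z)
      = (\<Sum>z\<in>successors x. (if z = decr_all x then down_prob x * f z else 0)
          + (\<Sum>l<n - 1. if z = incr x l then up_prob x l * f z else 0))"
  proof (intro sum.cong refl)
    fix z assume "z \<in> successors x"
    then have "z \<in> states n"
      using successors_subset[OF x] by blast
    then show "trans_prob n k x z * f z = (if z = decr_all x then down_prob x * f z else 0)
        + (\<Sum>l<n - 1. if z = incr x l then up_prob x l * f z else 0)"
      by (auto simp: trans_prob_eq[OF x] distrib_right sum_distrib_right intro!: sum.cong)
  qed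
  also have "\<dots> = (\<Sum>z\<in>successors x. if z = decr_all x then down_prob x * f z else 0)
      + (\<Sum>l<n - 1. \<Sum>z\<in>successors x. if z = incr x l then up_prob x l * f z else 0)"
    by (simp only: sum.distrib sum.swap[where A = "successors x"])
  also have "\<dots> = down_prob x * f (decr_all x) + (\<Sum>l<n - 1. up_prob x l * f (incr x l))"
    by (simp add: successors_def)
  finally show ?thesis .
qed

lemma sum_if_nth_eq_0:
  assumes "x \<in> states n"
  shows "(\<Sum>l<n - 1. if x ! l = 0 then a else b) = b * real (n - 1) + (a - b) * real (zeros x)"
proof -
  have "(\<Sum>l<n - 1. if x ! l = 0 then a else b) = (\<Sum>l<n - 1. b + (if x ! l = 0 then a - b else 0))"
    by (intro sum.cong) auto
  also have "\<dots> = b * real (n - 1) + (\<Sum>l\<in>{l \<in> {..<n - 1}. x ! l = 0}. a - b)"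
    by (simp add: sum.distrib flip: sum.inter_filter)
  also have "\<dots> = b * real (n - 1) + (a - b) * real (zeros x)"
    using zeros_eq_card[OF assms] by simp
  finally show ?thesis .
qed

lemma down_prob_plus_up_prob:
  assumes x: "x \<in> states n"
  shows "down_prob x + (\<Sum>l<n - 1. up_prob x l) = 1"
proof -
  consider "zeros x = 0" | "zeros x = n - 1" "zeros x \<noteq> 0" | "0 < zeros x" "zeros x < n - 1"
    using zeros_le[OF x] by linarith
  then show ?thesis
  proof cases
    case 1
    then show ?thesis
      using k_pos by (simp add: down_prob_def up_prob_def field_simps)
  next
    case 2
    then show ?thesis
      using n2 by (simp add: down_prob_def up_prob_def)
  next
    case 3
    then have "(\<Sum>l<n - 1. up_prob x l) = (\<Sum>l<n - 1. if x ! l = 0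
        then (real k - real (n - 1 - zeros x)) / (real k * real (zeros x)) else 1 / real k)"
      by (simp add: up_prob_def)
    also have "\<dots> = 1 / real k * real (n - 1)
        + ((real k - real (n - 1 - zeros x)) / (real k * real (zeros x)) - 1 / real k) * real (zeros x)"
      by (rule sum_if_nth_eq_0[OF x])
    also have "\<dots> = 1"
      using 3 k_pos by (simp add: of_nat_diff field_simps)
    finally show ?thesis
      using 3 by (simp add: down_prob_def)
  qed
qed

sublocale finite_kernel "states n" "trans_prob n k" successors
proof
  show "finite (successors x)" for x
    by (simp add: successors_def)
  show "x \<in> states n \<Longrightarrow> successors x \<subseteq> states n" for x
    by (rule successors_subset)
  show "0 \<le> trans_prob n k x z" for x z
    by (rule trans_prob_nonneg)
  show "z \<notin> successors x \<Longrightarrow> trans_prob n k x z = 0" for x z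
    by (rule trans_prob_outside)
  show "x \<in> states n \<Longrightarrow> (\<Sum>z\<in>successors x. trans_prob n k x z) = 1" for x
    using sum_successors_trans_prob[of x "\<lambda>_. 1"] down_prob_plus_up_prob[of x] by simp
qed

lemma expect_eq:
  "x \<in> states n \<Longrightarrow> expect f x = down_prob x * f (decr_all x) + (\<Sum>l<n - 1. up_prob x l * f (incr x l))"
  unfolding expect_def by (rule sum_successors_trans_prob)


section \<open>A quadratic Lyapunov function\<close>

definition total :: "nat list \<Rightarrow> real" where
  "total x = (\<Sum>i<n - 1. real (x ! i))"

definition sumsq :: "nat list \<Rightarrow> real" where
  "sumsq x = (\<Sum>i<n - 1. real (x ! i) ^ 2)"

definition lyap :: "nat list \<Rightarrow> real" where
  "lyap x = real k * ((real k + real n - 1) * sumsq x - 2 * total x ^ 2)"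

lemma total_incr: "x \<in> states n \<Longrightarrow> l < n - 1 \<Longrightarrow> total (incr x l) = total x + 1"
proof -
  assume x: "x \<in> states n" and l: "l < n - 1"
  have "total (incr x l) = (\<Sum>i<n - 1. real (x ! i) + (if i = l then 1 else 0))"
    unfolding total_def by (intro sum.cong) (auto simp: nth_incr[OF x])
  then show ?thesis
    using l unfolding total_def by (simp add: sum.distrib)
qed

lemma sumsq_incr:
  "x \<in> states n \<Longrightarrow> l < n - 1 \<Longrightarrow> sumsq (incr x l) = sumsq x + 2 * real (x ! l) + 1"
proof -
  assume x: "x \<in> states n" and l: "l < n - 1"
  have "sumsq (incr x l) = (\<Sum>i<n - 1. real (x ! i) ^ 2 + (if i = l then 2 * real (x ! l) + 1 else 0))"
    unfolding sumsq_def by (intro sum.cong) (auto simp: nth_incr[OF x] power2_eq_square algebra_simps)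
  then show ?thesis
    using l unfolding sumsq_def by (simp add: sum.distrib)
qed

lemma total_decr_all: "x \<in> states n \<Longrightarrow> zeros x = 0 \<Longrightarrow> total (decr_all x) = total x - (real n - 1)"
proof -
  assume x: "x \<in> states n" and z: "zeros x = 0"
  have "total (decr_all x) = (\<Sum>i<n - 1. real (x ! i) - 1)"
    unfolding total_def by (intro sum.cong) (auto simp: nth_decr_all[OF x z])
  then show ?thesis
    unfolding total_def by (simp add: sum_subtractf)
qed

lemma sumsq_decr_all:
  "x \<in> states n \<Longrightarrow> zeros x = 0 \<Longrightarrow> sumsq (decr_all x) = sumsq x - 2 * total x + (real n - 1)"
proof -
  assume x: "x \<in> states n" and z: "zeros x = 0"
  have "sumsq (decr_all x) = (\<Sum>i<n - 1. real (x ! i) ^ 2 - 2 * real (x ! i) + 1)"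
    unfolding sumsq_def
    by (intro sum.cong) (auto simp: nth_decr_all[OF x z] power2_eq_square algebra_simps)
  then show ?thesis
    unfolding sumsq_def total_def by (simp add: sum.distrib sum_subtractf sum_distrib_left)
qed

lemma up_prob_mult_nth: "x \<in> states n \<Longrightarrow> l < n - 1 \<Longrightarrow> up_prob x l * real (x ! l) = real (x ! l) / real k"
  using nth_eq_0_if_zeros_full[of x l] by (auto simp: up_prob_def)

text \<open>The coefficients of \<^const>\<open>lyap\<close> are tuned so that the quadratic terms cancel in the
  drift, which then depends on \<open>x\<close> only through \<^term>\<open>total x\<close> and whether \<open>x \<in> R\<^sub>0\<close>.\<close>

lemma expect_lyap:
  assumes x: "x \<in> states n"
  shows "expect lyap x = (if zeros x = 0
     then lyap x - 2 * total x * (real k - real n) * (real k - real n + 1)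
          + (real n - 1) * ((real k - real n + 1)^2 + real k + real n - 3)
     else lyap x - 2 * total x * (real k - real n + 1) + real k * (real k + real n - 3))"
proof -
  define A0 where "A0 = real k * ((real k + real n - 1) * (sumsq x + 1) - 2 * (total x + 1)^2)"
  define A1 where "A1 = 2 * real k * (real k + real n - 1)"
  have lyap_incr: "lyap (incr x l) = A0 + A1 * real (x ! l)" if "l < n - 1" for l
    unfolding lyap_def A0_def A1_def using total_incr[OF x that] sumsq_incr[OF x that]
    by (simp add: algebra_simps)
  have "(\<Sum>l<n - 1. up_prob x l * lyap (incr x l))
      = A0 * (\<Sum>l<n - 1. up_prob x l) + A1 * (\<Sum>l<n - 1. up_prob x l * real (x ! l))"
    by (simp add: lyap_incr algebra_simps sum.distrib sum_distrib_left)
  also have "\<dots> = A0 * (1 - down_prob x) + A1 * (total x / real k)"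
    using down_prob_plus_up_prob[OF x]
    by (simp add: total_def up_prob_mult_nth[OF x] sum_divide_distrib eq_diff_eq')
  finally have up_part: "(\<Sum>l<n - 1. up_prob x l * lyap (incr x l))
      = A0 * (1 - down_prob x) + A1 * (total x / real k)" .
  show ?thesis
  proof (cases "zeros x = 0")
    case True
    have "lyap (decr_all x) = real k * ((real k + real n - 1)
        * (sumsq x - 2 * total x + (real n - 1)) - 2 * (total x - (real n - 1))^2)"
      by (simp only: lyap_def total_decr_all[OF x True] sumsq_decr_all[OF x True])
    then have down_part: "down_prob x * lyap (decr_all x) = (real k - real n + 1)
        * ((real k + real n - 1) * (sumsq x - 2 * total x + (real n - 1)) - 2 * (total x - (real n - 1))^2)"
      using True k_pos by (simp add: down_prob_def)
    have "A0 * (1 - down_prob x) = (real n - 1)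
        * ((real k + real n - 1) * (sumsq x + 1) - 2 * (total x + 1)^2)"
      using True k_pos by (simp add: down_prob_def A0_def field_simps)
    then show ?thesis
      using True k_pos unfolding expect_eq[OF x] up_part down_part
      by (simp add: A1_def lyap_def power2_eq_square algebra_simps)
  next
    case False
    then show ?thesis
      using k_pos unfolding expect_eq[OF x] up_part
      by (simp add: down_prob_def A0_def A1_def lyap_def field_simps power2_eq_square)
  qed
qed

lemma total_nonneg: "0 \<le> total x"
  unfolding total_def by (auto intro!: sum_nonneg)

lemma lyap_nonneg:
  assumes "x \<in> states n"
  shows "0 \<le> lyap x"
proof -
  have "total x ^ 2 \<le> sumsq x * (real n - 1)"
    using Cauchy_Schwarz_ineq_sum[of "\<lambda>i. real (x ! i)" "\<lambda>i. 1" "{..<n - 1}"]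
    by (simp add: total_def sumsq_def)
  then have "2 * total x ^ 2 \<le> 2 * (real n - 1) * sumsq x"
    by (simp add: algebra_simps)
  also have "\<dots> \<le> (real k + real n - 1) * sumsq x"
    using nk by (intro mult_right_mono) (auto simp: sumsq_def intro!: sum_nonneg)
  finally show ?thesis
    unfolding lyap_def using k_pos by simp
qed

lemma interior_drift_const_nonneg: "0 \<le> (real k - real n + 1)^2 + real k + real n - 3"
  using zero_le_power2[of "real k - real n + 1"] nk n2 by linarith

definition lyap_bound :: real where
  "lyap_bound = real k * (real k + real n - 3) + (real n - 1) * ((real k - real n + 1)^2 + real k + real n - 3)"

lemma lyap_bound_ge_1: "1 \<le> lyap_bound"
proof -
  have "1 \<le> real k * (real k + real n - 3)"
    using nk n2 by (intro order.trans[OF _ mult_mono[of 1 "real k" 1 "real k + real n - 3"]]) auto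
  moreover have "0 \<le> (real n - 1) * ((real k - real n + 1)^2 + real k + real n - 3)"
    using n2 interior_drift_const_nonneg by simp
  ultimately show ?thesis
    unfolding lyap_bound_def by linarith
qed

lemma expect_lyap_le:
  assumes x: "x \<in> states n"
  shows "expect lyap x \<le> lyap x - 2 * total x + lyap_bound"
proof -
  have gap: "1 \<le> real k - real n"
    using nk by linarith
  then have "1 \<le> (real k - real n) * (real k - real n + 1)"
    using mult_mono[of 1 "real k - real n" 1 "real k - real n + 1"] by simp
  then have "2 * total x \<le> 2 * total x * ((real k - real n) * (real k - real n + 1))"
    and "2 * total x \<le> 2 * total x * (real k - real n + 1)"
    using gap total_nonneg[of x] mult_left_mono[of 1 _ "2 * total x"] by simp_all
  moreover have "0 \<le> real k * (real k + real n - 3)"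
    and "0 \<le> (real n - 1) * ((real k - real n + 1)^2 + real k + real n - 3)"
    using nk n2 interior_drift_const_nonneg by auto
  ultimately show ?thesis
    using expect_lyap[OF x] unfolding lyap_bound_def by (simp split: if_splits)
qed

lemma finite_total_le: "finite {x \<in> states n. total x \<le> b}"
proof (rule finite_subset)
  show "{x \<in> states n. total x \<le> b} \<subseteq> {xs. set xs \<subseteq> {0..nat \<lceil>b\<rceil>} \<and> length xs = n - 1}"
  proof safe
    fix x a assume x: "x \<in> states n" and b: "total x \<le> b" and "a \<in> set x"
    then obtain i where "i < n - 1" and "x ! i = a"
      by (auto simp: in_set_conv_nth states_def)
    then have "real a \<le> total x"
      unfolding total_def by (auto intro!: member_le_sum)
    with b have "a \<le> nat \<lceil>b\<rceil>"
      by linarith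
    then show "a \<in> {0..nat \<lceil>b\<rceil>}"
      by simp
  qed (simp add: states_def)
qed (rule finite_lists_length_eq, simp)


section \<open>Paths to a target state\<close>

lemma trans_prob_incr_ge:
  assumes x: "x \<in> states n" and l: "l < n - 1"
  shows "1 / real k \<le> trans_prob n k x (incr x l)"
proof -
  have "up_prob x l \<le> (\<Sum>l'<n - 1. if incr x l = incr x l' then up_prob x l' else 0)"
    using member_le_sum[of l "{..<n - 1}" "\<lambda>l'. if incr x l = incr x l' then up_prob x l' else 0"]
      l up_prob_nonneg[OF x] by simp
  also have "\<dots> \<le> trans_prob n k x (incr x l)"
    using down_prob_nonneg by (simp add: trans_prob_eq[OF x incr_in_states[OF x]])
  finally show ?thesis
    using up_prob_ge[OF x, of l] by simp
qed

lemma trans_prob_decr_all_ge: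
  assumes x: "x \<in> states n" and z: "zeros x = 0"
  shows "1 / real k \<le> trans_prob n k x (decr_all x)"
proof -
  have "1 / real k \<le> down_prob x"
    using z nk k_pos by (simp add: down_prob_def frac_le)
  also have "\<dots> \<le> trans_prob n k x (decr_all x)"
    using up_prob_nonneg[OF x] by (simp add: trans_prob_eq[OF x decr_all_in_states[OF x]] sum_nonneg)
  finally show ?thesis .
qed

definition excess :: "nat list \<Rightarrow> nat list \<Rightarrow> nat" where
  "excess y x = Max (insert 1 ((\<lambda>i. x ! i - y ! i) ` {..<n - 1}))"

definition rank_to :: "nat list \<Rightarrow> nat list \<Rightarrow> nat" where
  "rank_to y x = excess y x + (\<Sum>i<n - 1. y ! i + excess y x - x ! i)"

text \<open>A path from \<open>x\<close> to \<open>y\<close>: with \<open>t = excess y x\<close> every \<open>x ! i \<le> y ! i + t\<close>. Raise the first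
  coordinate lying strictly below this level; once \<open>x = y + t\<close> componentwise, \<open>x\<close> lies in \<open>R\<^sub>0\<close>
  (as \<open>t \<ge> 1\<close>) and may step down to \<open>y + (t - 1)\<close>. \<^const>\<open>rank_to\<close> strictly decreases along
  the path until \<open>y\<close> is reached.\<close>

definition step_towards :: "nat list \<Rightarrow> nat list \<Rightarrow> nat list" where
  "step_towards y x =
    (if \<forall>i<n - 1. x ! i = y ! i + excess y x then decr_all x
     else incr x (LEAST i. i < n - 1 \<and> x ! i < y ! i + excess y x))"

lemma le_excess: "i < n - 1 \<Longrightarrow> x ! i \<le> y ! i + excess y x"
proof -
  assume "i < n - 1"
  then have "x ! i - y ! i \<le> excess y x"
    unfolding excess_def by (intro Max_ge) auto
  then show ?thesis
    by arith
qed

lemma one_le_excess: "1 \<le> excess y x"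
  unfolding excess_def by (intro Max_ge) auto

lemma excess_attained: "excess y x = 1 \<or> (\<exists>i<n - 1. x ! i - y ! i = excess y x)"
  using Max_in[of "insert 1 ((\<lambda>i. x ! i - y ! i) ` {..<n - 1})"] unfolding excess_def by auto

lemma excess_eqI:
  assumes "\<And>i. i < n - 1 \<Longrightarrow> x ! i - y ! i \<le> t" and "1 \<le> t"
    and "t = 1 \<or> (\<exists>i<n - 1. x ! i - y ! i = t)"
  shows "excess y x = t"
  unfolding excess_def using assms by (intro Max_eqI) auto

lemma step_towards_on_level:
  assumes x: "x \<in> states n" and y: "y \<in> states n"
    and level: "\<forall>i<n - 1. x ! i = y ! i + excess y x"
  shows "zeros x = 0" and "step_towards y x = decr_all x"
    and "decr_all x = y \<or> rank_to y (decr_all x) < rank_to y x"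
proof -
  define t where "t = excess y x"
  have t: "1 \<le> t"
    unfolding t_def by (rule one_le_excess)
  have len: "length x = n - 1" "length y = n - 1" "length (decr_all x) = n - 1"
    using x y by (simp_all add: states_def decr_all_def)
  have decr: "decr_all x ! i = y ! i + (t - 1)" if "i < n - 1" for i
    using level that t len by (simp add: decr_all_def t_def)
  show "zeros x = 0"
    using level t by (simp add: zeros_eq_0_iff[OF x] t_def)
  show "step_towards y x = decr_all x"
    using level by (simp add: step_towards_def)
  show "decr_all x = y \<or> rank_to y (decr_all x) < rank_to y x"
  proof (cases "t = 1")
    case True
    then have "decr_all x = y"
      using len decr by (intro nth_equalityI) auto
    then show ?thesis ..
  next
    case False
    have "excess y (decr_all x) = t - 1"
      using False t n2 decr by (intro excess_eqI) (auto intro!: exI[of _ 0])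
    then have "rank_to y (decr_all x) = t - 1"
      by (simp add: rank_to_def decr)
    moreover have "t \<le> rank_to y x"
      by (simp add: rank_to_def t_def)
    ultimately have "rank_to y (decr_all x) < rank_to y x"
      using t by linarith
    then show ?thesis ..
  qed
qed

lemma step_towards_below_level:
  assumes x: "x \<in> states n" and below: "\<not> (\<forall>i<n - 1. x ! i = y ! i + excess y x)"
  obtains i where "i < n - 1" and "step_towards y x = incr x i"
    and "rank_to y (incr x i) < rank_to y x"
proof -
  define t where "t = excess y x"
  define i where "i = (LEAST i. i < n - 1 \<and> x ! i < y ! i + t)"
  have "\<exists>i. i < n - 1 \<and> x ! i < y ! i + t"
    using below le_excess[of _ x y] unfolding t_def by (meson le_neq_implies_less)
  then have i: "i < n - 1" "x ! i < y ! i + t"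
    unfolding i_def by (metis (mono_tags, lifting) LeastI_ex)+
  have t: "1 \<le> t"
    unfolding t_def by (rule one_le_excess)
  have nth: "incr x i ! j = (if j = i then Suc (x ! i) else x ! j)" if "j < n - 1" for j
    using nth_incr[OF x that] .
  have "excess y (incr x i) = t"
  proof (rule excess_eqI)
    show "incr x i ! j - y ! j \<le> t" if "j < n - 1" for j
      using le_excess[OF that, of x y] i nth[OF that] by (auto simp: t_def)
    show "t = 1 \<or> (\<exists>j<n - 1. incr x i ! j - y ! j = t)"
    proof (cases "t = 1")
      case False
      then obtain j where "j < n - 1" "x ! j - y ! j = t"
        using excess_attained[of y x] by (auto simp: t_def)
      moreover from this have "j \<noteq> i"
        using i t by auto
      ultimately show ?thesis
        using nth by auto
    qed simp
  qed (rule t)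
  moreover have "(\<Sum>j<n - 1. y ! j + t - x ! j) = (\<Sum>j<n - 1. y ! j + t - incr x i ! j) + 1"
  proof -
    have "(\<Sum>j<n - 1. y ! j + t - x ! j)
        = (\<Sum>j<n - 1. (y ! j + t - incr x i ! j) + (if j = i then 1 else 0))"
      using i by (intro sum.cong) (auto simp: nth)
    then show ?thesis
      using i by (simp add: sum.distrib)
  qed
  ultimately have "rank_to y (incr x i) < rank_to y x"
    by (simp add: rank_to_def t_def)
  moreover have "step_towards y x = incr x i"
    unfolding step_towards_def i_def t_def by (rule if_not_P[OF below])
  ultimately show ?thesis
    using that i by blast
qed

lemma step_towards:
  assumes x: "x \<in> states n" and y: "y \<in> states n"
  shows "step_towards y x \<in> successors x" and "1 / real k \<le> trans_prob n k x (step_towards y x)"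
    and "step_towards y x = y \<or> rank_to y (step_towards y x) < rank_to y x"
proof -
  have "step_towards y x \<in> successors x \<and> 1 / real k \<le> trans_prob n k x (step_towards y x)
      \<and> (step_towards y x = y \<or> rank_to y (step_towards y x) < rank_to y x)"
  proof (cases "\<forall>i<n - 1. x ! i = y ! i + excess y x")
    case True
    then show ?thesis
      using step_towards_on_level[OF x y True] trans_prob_decr_all_ge[OF x]
      by (simp add: successors_def)
  next
    case False
    then obtain i where "i < n - 1" "step_towards y x = incr x i" "rank_to y (incr x i) < rank_to y x"
      using step_towards_below_level[OF x] by blast
    then show ?thesis
      using trans_prob_incr_ge[OF x] by (simp add: successors_def)
  qed
  then show "step_towards y x \<in> successors x" and "1 / real k \<le> trans_prob n k x (step_towards y x)"
    and "step_towards y x = y \<or> rank_to y (step_towards y x) < rank_to y x"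
    by blast+
qed

lemma exists_mean_hitting_supersolution:
  assumes y: "y \<in> states n"
  shows "\<exists>W. mean_hitting_supersolution y W"
proof (rule mean_hitting_supersolution_exists
    [where step = "step_towards y" and rank = "rank_to y" and p = "1 / real k"])
  show "finite {x \<in> states n. total x \<le> lyap_bound}"
    by (rule finite_total_le)
  show "expect lyap x \<le> lyap x - 1" if "x \<in> states n - {x \<in> states n. total x \<le> lyap_bound}" for x
    using that expect_lyap_le[of x] lyap_bound_ge_1 by auto
  show "expect lyap x \<le> lyap x + lyap_bound" if "x \<in> states n" for x
    using expect_lyap_le[OF that] total_nonneg[of x] by simp
qed (use y lyap_bound_ge_1 k_pos lyap_nonneg step_towards[OF _ y] in auto)

lemma first_passage_eq_passage_prob:
  assumes "x \<in> states n"
  shows "first_passage n k m x y = ennreal (passage_prob y m x)"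
proof -
  have "first_passage n k (Suc m) x y = ennreal (passage_prob y (Suc m) x)"
    if "x \<in> states n" for m x
    using that
  proof (induction m arbitrary: x)
    case (Suc m)
    have "first_passage n k (Suc (Suc m)) x y
        = (\<Sum>\<^sub>\<infinity>z\<in>states n - {y}. ennreal (trans_prob n k x z) * ennreal (passage_prob y (Suc m) z))"
      using Suc.IH by (simp only: first_passage.simps) (intro infsum_cong; simp)
    also have "\<dots> = ennreal (passage_prob y (Suc (Suc m)) x)"
      using Suc.prems by (simp add: infsum_eq_expect passage_prob_nonneg)
    finally show ?case .
  qed simp
  then show ?thesis
    using assms by (cases m) simp_all
qed

lemma positive_recurrentI:
  assumes y: "y \<in> states n"
    and sums: "(\<lambda>m. passage_prob y m y) sums 1"
    and summable: "summable (\<lambda>m. real m * passage_prob y m y)"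
  shows "positive_recurrent n k y"
proof -
  have "(\<Sum>m. first_passage n k m y y) = ennreal (\<Sum>m. passage_prob y m y)"
    using y sums
    by (simp add: first_passage_eq_passage_prob suminf_ennreal2 passage_prob_nonneg sums_iff)
  then have return_certain: "(\<Sum>m. first_passage n k m y y) = 1"
    using sums by (simp add: sums_iff)
  have "(\<Sum>m. of_nat m * first_passage n k m y y) = (\<Sum>m. ennreal (real m * passage_prob y m y))"
    using y by (simp add: first_passage_eq_passage_prob ennreal_mult' ennreal_of_nat_eq_real_of_nat)
  also have "\<dots> = ennreal (\<Sum>m. real m * passage_prob y m y)"
    using summable by (simp add: suminf_ennreal2 passage_prob_nonneg)
  finally show ?thesis
    using return_certain by (simp add: positive_recurrent_def)
qed

end

theorem proposition7p1:
  fixes n k :: nat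
  assumes "3 \<le> n" and "n \<le> k" and "k > n"
  shows "stable n k"
proof -
  interpret chain n k
    using assms by unfold_locales auto
  show ?thesis
    unfolding stable_def
  proof
    fix y assume y: "y \<in> states n"
    then obtain W where W: "mean_hitting_supersolution y W"
      using exists_mean_hitting_supersolution by blast
    show "positive_recurrent n k y"
      using passage_prob_sums_1[OF W y] summable_hit_time[OF W y] by (rule positive_recurrentI[OF y])
  qed
qed

end
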